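(* Let $n\in\mathbb{N}$ be fixed, let $f:[0,1]\times\mathbb{R}^2\to\mathbb{R}$ be continuous with $f(t,0,0)=0$ for all $t\in[0,1]$ and satisfying condition (P2) below, and let $h:[0,1]\to\mathbb{R}$ be continuous with $h(0)=h(1)=0$. Then the discrete boundary value problem $$-\Delta^2x(k-1)+\frac1{n^2}f\!\left(\frac kn,\,n\Delta x(k-1),\,x(k)\right)=\frac1{n^2}h\!\left(\frac kn\right),\qquad x(0)=x(n)=0,$$ has exactly one solution $x\in\mathbb{E}$ (in the weak sense described in the context).
   Context: Condition (P2): for all $s,t,w,z\in\mathbb{R}$ and all $k,l\in[0,1]$, $(s-t)\big(f(k,w,s)-f(l,z,t)\big)\ge 0$. $\Delta x(k)=x(k+1)-x(k)$, $\Delta^2x(k)=\Delta(\Delta x)(k)=x(k+2)-2x(k+1)+x(k)$. $\mathbb{E}=\{x:\{0,1,\dots,n\}\to\mathbb{R}\ :\ x(0)=x(n)=0\}$, an $n$-dimensional... (more precisely $(n-1)$-dimensional) real Hilbert space with inner product $\langle x,y\rangle_{\mathbb{E}}=\sum_{k=1}^n\Delta x(k-1)\Delta y(k-1)$. A solution of the discrete problem is an $x\in\mathbb{E}$ such that for all $y\in\mathbb{E}$: $$\sum_{k=1}^n\Delta x(k-1)\Delta y(k-1)+\frac1{n^2}\sum_{k=1}^n y(k)f\!\left(\frac kn,n\Delta x(k-1),x(k)\right)=\frac1{n^2}\sum_{k=1}^n y(k)h\!\left(\frac kn\right).$$ *)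

theory Defs
  imports "HOL-Analysis.Analysis"
begin

text \<open>Grid functions on {0,...,n} are represented as nat => real, normalised to vanish
outside {0..n}, so that elements of E correspond one-to-one to functions on {0,...,n}.\<close>

definition fdiff :: "(nat \<Rightarrow> real) \<Rightarrow> nat \<Rightarrow> real" where
  "fdiff x k = x (k + 1) - x k"

definition gridE :: "nat \<Rightarrow> (nat \<Rightarrow> real) set" where
  "gridE n = {x. x 0 = 0 \<and> x n = 0 \<and> (\<forall>k>n. x k = 0)}"

definition cond_P2 :: "(real \<Rightarrow> real \<Rightarrow> real \<Rightarrow> real) \<Rightarrow> bool" where
  "cond_P2 f \<longleftrightarrow> (\<forall>s t w z. \<forall>k\<in>{0..1}. \<forall>l\<in>{0..1}.
      (s - t) * (f k w s - f l z t) \<ge> 0)"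

definition is_weak_solution ::
  "nat \<Rightarrow> (real \<Rightarrow> real \<Rightarrow> real \<Rightarrow> real) \<Rightarrow> (real \<Rightarrow> real) \<Rightarrow> (nat \<Rightarrow> real) \<Rightarrow> bool" where
  "is_weak_solution n f h x \<longleftrightarrow> x \<in> gridE n \<and>
     (\<forall>y\<in>gridE n.
        (\<Sum>k=1..n. fdiff x (k - 1) * fdiff y (k - 1))
        + 1 / (real n)^2 * (\<Sum>k=1..n. y k * f (real k / real n) (real n * fdiff x (k - 1)) (x k))
        = 1 / (real n)^2 * (\<Sum>k=1..n. y k * h (real k / real n)))"

end

theory Submission
  imports Defs
begin

text \<open>Uniqueness: testing the equations of two solutions with their difference \<open>y\<close> and
subtracting gives \<open>\<parallel>y\<parallel>\<^sup>2 + n\<^sup>-\<^sup>2 \<Sum>\<^sub>k y(k) (f(\<dots>, x\<^sub>1(k)) - f(\<dots>, x\<^sub>2(k))) = 0\<close>, where (P2) makes the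
sum nonnegative. Existence by shooting: summation by parts turns the weak
formulation into the second-order difference equation, which determines \<open>x\<close> from
\<open>x(0) = 0\<close> and the slope \<open>a = x(1)\<close>. The endpoint \<open>x(n)\<close> depends continuously on
\<open>a\<close> and, by (P2), grows at least like \<open>n a\<close>, so it vanishes for some \<open>a\<close> by the intermediate value
theorem.\<close>

lemma sum_fdiff_mult_by_parts:
  fixes x y :: "nat \<Rightarrow> real"
  assumes "y 0 = 0"
  shows "(\<Sum>k=1..m. fdiff x (k - 1) * fdiff y (k - 1))
       = (\<Sum>k=1..m. y k * (2 * x k - x (k + 1) - x (k - 1))) + y m * fdiff x m"
proof (induction m)
  case 0
  then show ?case using assms by simp
next
  case (Suc m)
  then show ?case by (simp add: fdiff_def algebra_simps)
qed

lemma weak_solution_if_difference_equation: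
  assumes x: "x \<in> gridE n"
    and eq: "\<And>k. 1 \<le> k \<Longrightarrow> k < n \<Longrightarrow> 2 * x k - x (k + 1) - x (k - 1)
               = (h (real k / real n) - f (real k / real n) (real n * fdiff x (k - 1)) (x k)) / (real n)^2"
  shows "is_weak_solution n f h x"
  unfolding is_weak_solution_def
proof (intro conjI ballI x)
  fix y assume y: "y \<in> gridE n"
  define F where "F k = f (real k / real n) (real n * fdiff x (k - 1)) (x k)" for k
  have y0: "y 0 = 0" and yn: "y n = 0" using y by (auto simp: gridE_def)
  have "(\<Sum>k=1..n. fdiff x (k - 1) * fdiff y (k - 1))
      = (\<Sum>k=1..n. y k * (2 * x k - x (k + 1) - x (k - 1)))"
    using sum_fdiff_mult_by_parts[of y x n, OF y0] yn by simp
  also have "\<dots> = (\<Sum>k=1..n. y k * ((h (real k / real n) - F k) / (real n)^2))"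
  proof (intro sum.cong refl)
    fix k assume "k \<in> {1..n}"
    then show "y k * (2 * x k - x (k + 1) - x (k - 1)) = y k * ((h (real k / real n) - F k) / (real n)^2)"
      using eq[of k] yn unfolding F_def by (cases "k = n") auto
  qed
  also have "\<dots> = 1 / (real n)^2 * (\<Sum>k=1..n. y k * h (real k / real n))
                 - 1 / (real n)^2 * (\<Sum>k=1..n. y k * F k)"
    by (simp add: sum_distrib_left sum_subtractf[symmetric] algebra_simps diff_divide_distrib)
  finally show "(\<Sum>k=1..n. fdiff x (k - 1) * fdiff y (k - 1))
      + 1 / (real n)^2 * (\<Sum>k=1..n. y k * f (real k / real n) (real n * fdiff x (k - 1)) (x k))
      = 1 / (real n)^2 * (\<Sum>k=1..n. y k * h (real k / real n))"
    unfolding F_def by simp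
qed

lemma gridE_eq_zero_if_fdiff_zero:
  assumes y: "y \<in> gridE n" and z: "\<And>k. k \<in> {1..n} \<Longrightarrow> fdiff y (k - 1) = 0"
  shows "y = (\<lambda>_. 0)"
proof
  fix k
  show "y k = 0"
  proof (cases "k \<le> n")
    case True
    then show ?thesis
    proof (induction k)
      case 0
      then show ?case using y by (simp add: gridE_def)
    next
      case (Suc k)
      then show ?case using z[of "Suc k"] by (simp add: fdiff_def)
    qed
  next
    case False
    then show ?thesis using y by (simp add: gridE_def)
  qed
qed

lemma weak_solution_unique:
  assumes P2: "cond_P2 f"
    and s1: "is_weak_solution n f h x1" and s2: "is_weak_solution n f h x2"
  shows "x1 = x2"
proof -
  define y where "y k = x1 k - x2 k" for k
  define F1 where "F1 k = f (real k / real n) (real n * fdiff x1 (k - 1)) (x1 k)" for k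
  define F2 where "F2 k = f (real k / real n) (real n * fdiff x2 (k - 1)) (x2 k)" for k
  have yE: "y \<in> gridE n"
    using s1 s2 by (auto simp: is_weak_solution_def gridE_def y_def)
  have e1: "(\<Sum>k=1..n. fdiff x1 (k - 1) * fdiff y (k - 1)) + 1 / (real n)^2 * (\<Sum>k=1..n. y k * F1 k)
      = 1 / (real n)^2 * (\<Sum>k=1..n. y k * h (real k / real n))"
    using s1 yE unfolding is_weak_solution_def F1_def by blast
  have e2: "(\<Sum>k=1..n. fdiff x2 (k - 1) * fdiff y (k - 1)) + 1 / (real n)^2 * (\<Sum>k=1..n. y k * F2 k)
      = 1 / (real n)^2 * (\<Sum>k=1..n. y k * h (real k / real n))"
    using s2 yE unfolding is_weak_solution_def F2_def by blast
  have energy: "(\<Sum>k=1..n. (fdiff y (k - 1))^2) + 1 / (real n)^2 * (\<Sum>k=1..n. y k * (F1 k - F2 k)) = 0"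
  proof -
    have fy: "fdiff y j = fdiff x1 j - fdiff x2 j" for j by (simp add: fdiff_def y_def)
    have a: "(\<Sum>k=1..n. (fdiff y (k - 1))^2) = (\<Sum>k=1..n. fdiff x1 (k - 1) * fdiff y (k - 1))
                 - (\<Sum>k=1..n. fdiff x2 (k - 1) * fdiff y (k - 1))"
      by (simp add: sum_subtractf[symmetric] power2_eq_square fy algebra_simps)
    have b: "(\<Sum>k=1..n. y k * (F1 k - F2 k)) = (\<Sum>k=1..n. y k * F1 k) - (\<Sum>k=1..n. y k * F2 k)"
      by (simp add: sum_subtractf[symmetric] algebra_simps)
    show ?thesis unfolding a b using e1 e2 by (simp add: algebra_simps)
  qed
  have "0 \<le> y k * (F1 k - F2 k)" if "k \<in> {1..n}" for k
  proof -
    have "real k / real n \<in> {0..1}" using that by auto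
    then show ?thesis using P2 unfolding cond_P2_def F1_def F2_def y_def by blast
  qed
  then have "0 \<le> (\<Sum>k=1..n. y k * (F1 k - F2 k))"
    by (intro sum_nonneg) blast
  then have "0 \<le> 1 / (real n)^2 * (\<Sum>k=1..n. y k * (F1 k - F2 k))"
    by simp
  moreover have "0 \<le> (\<Sum>k=1..n. (fdiff y (k - 1))^2)" by (simp add: sum_nonneg)
  ultimately have "(\<Sum>k=1..n. (fdiff y (k - 1))^2) = 0" using energy by linarith
  then have "fdiff y (k - 1) = 0" if "k \<in> {1..n}" for k
    using that by (subst (asm) sum_nonneg_eq_0_iff) auto
  then have "y = (\<lambda>_. 0)" using gridE_eq_zero_if_fdiff_zero[OF yE] by blast
  then show ?thesis by (simp add: fun_eq_iff y_def)
qed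

text \<open>\<open>shoot f h n a k = (x k, x (k + 1))\<close> for the solution \<open>x\<close> of the difference equation
with \<open>x 0 = 0\<close>, \<open>x 1 = a\<close>. The time argument is clamped to \<open>[0,1]\<close> so that (P2) and the
continuity of \<open>f\<close> apply at every step.\<close>

primrec shoot :: "(real \<Rightarrow> real \<Rightarrow> real \<Rightarrow> real) \<Rightarrow> (real \<Rightarrow> real) \<Rightarrow> nat \<Rightarrow> real \<Rightarrow> nat \<Rightarrow> real \<times> real" where
  "shoot f h n a 0 = (0, a)"
| "shoot f h n a (Suc k) = (snd (shoot f h n a k),
     2 * snd (shoot f h n a k) - fst (shoot f h n a k)
     + (f (min 1 (real (Suc k) / real n)) (real n * (snd (shoot f h n a k) - fst (shoot f h n a k)))
          (snd (shoot f h n a k)) - h (real (Suc k) / real n)) / (real n)^2)"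

text \<open>(P2) makes the \<open>f\<close>-correction of the higher shot the larger one, so the gap between
the slopes of two shots never shrinks.\<close>

lemma shoot_gap_mono:
  assumes P2: "cond_P2 f" and lt: "a < a'"
  shows "snd (shoot f h n a' k) - snd (shoot f h n a k) - (fst (shoot f h n a' k) - fst (shoot f h n a k)) \<ge> a' - a
       \<and> snd (shoot f h n a' k) - snd (shoot f h n a k) \<ge> real (Suc k) * (a' - a)"
proof (induction k)
  case 0
  then show ?case by simp
next
  case (Suc k)
  define u where "u = fst (shoot f h n a k)"
  define v where "v = snd (shoot f h n a k)"
  define u' where "u' = fst (shoot f h n a' k)"
  define v' where "v' = snd (shoot f h n a' k)"
  define c where "c = min 1 (real (Suc k) / real n)"
  have c: "c \<in> {0..1}" unfolding c_def by auto
  have IH1: "v' - v - (u' - u) \<ge> a' - a" and IH2: "v' - v \<ge> real (Suc k) * (a' - a)"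
    using Suc.IH unfolding u_def v_def u'_def v'_def by auto
  have "v' - v > 0"
    using IH2 lt by (smt (verit) mult_pos_pos of_nat_0_less_iff zero_less_Suc)
  moreover have "(v' - v) * (f c (real n * (v' - u')) v' - f c (real n * (v - u)) v) \<ge> 0"
    using P2 c unfolding cond_P2_def by blast
  ultimately have "f c (real n * (v' - u')) v' - f c (real n * (v - u)) v \<ge> 0"
    by (simp add: zero_le_mult_iff)
  then have D: "(f c (real n * (v' - u')) v' - f c (real n * (v - u)) v) / (real n)^2 \<ge> 0"
    by simp
  have "snd (shoot f h n a' (Suc k)) - snd (shoot f h n a (Suc k))
      = (v' - v) + (v' - v - (u' - u)) + (f c (real n * (v' - u')) v' - f c (real n * (v - u)) v) / (real n)^2"
    by (simp add: u_def v_def u'_def v'_def c_def algebra_simps diff_divide_distrib)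
  moreover have "fst (shoot f h n a' (Suc k)) - fst (shoot f h n a (Suc k)) = v' - v"
    by (simp add: v_def v'_def)
  ultimately show ?case using IH1 IH2 D by (simp add: algebra_simps)
qed

lemma continuous_on_shoot:
  assumes fc: "continuous_on ({0..1} \<times> UNIV \<times> UNIV) (\<lambda>(t, w, s). f t w s)"
  shows "continuous_on UNIV (\<lambda>a. shoot f h n a k)"
proof (induction k)
  case 0
  then show ?case by (simp add: continuous_on_Pair continuous_on_id)
next
  case (Suc k)
  define c where "c = min 1 (real (Suc k) / real n)"
  have s: "continuous_on UNIV (\<lambda>a. snd (shoot f h n a k))"
    and fs: "continuous_on UNIV (\<lambda>a. fst (shoot f h n a k))"
    using Suc.IH by (auto intro: continuous_on_snd continuous_on_fst)
  have "continuous_on UNIV (\<lambda>a. (c, real n * (snd (shoot f h n a k) - fst (shoot f h n a k)), snd (shoot f h n a k)))"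
    by (intro continuous_on_Pair continuous_on_const continuous_on_mult continuous_on_diff s fs)
  then have "continuous_on UNIV (\<lambda>a. (\<lambda>(t, w, s). f t w s)
      (c, real n * (snd (shoot f h n a k) - fst (shoot f h n a k)), snd (shoot f h n a k)))"
    by (rule continuous_on_compose2[OF fc]) (auto simp: c_def)
  then have F: "continuous_on UNIV (\<lambda>a. f c (real n * (snd (shoot f h n a k) - fst (shoot f h n a k))) (snd (shoot f h n a k)))"
    by simp
  show ?case
    unfolding shoot.simps c_def[symmetric] unfolding divide_inverse
    by (intro continuous_on_Pair continuous_on_add continuous_on_diff continuous_on_mult
        continuous_on_const s fs F)
qed

lemma expanding_continuous_has_root:
  fixes g :: "real \<Rightarrow> real"
  assumes gc: "continuous_on UNIV g" and c: "c > 0"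
    and expand: "\<And>a a'. a \<le> a' \<Longrightarrow> g a' - g a \<ge> c * (a' - a)"
  obtains a where "g a = 0"
proof -
  define b where "b = - g 0 / c"
  have "c * b = - g 0" using c by (simp add: b_def)
  consider "g 0 \<le> 0" "b \<ge> 0" "g b \<ge> 0" | "g 0 \<ge> 0" "b \<le> 0" "g b \<le> 0"
    using expand[of 0 b] expand[of b 0] c \<open>c * b = - g 0\<close>
    by (cases "g 0 \<le> 0") (auto simp: b_def divide_nonpos_pos)
  then show ?thesis
  proof cases
    case 1
    then show ?thesis using IVT'[of g 0 0 b] gc that continuous_on_subset by blast
  next
    case 2
    then show ?thesis using IVT'[of g b 0 0] gc that continuous_on_subset by blast
  qed
qed

lemma weak_solution_exists:
  assumes fc: "continuous_on ({0..1} \<times> UNIV \<times> UNIV) (\<lambda>(t, w, s). f t w s)"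
    and P2: "cond_P2 f"
  shows "\<exists>x. is_weak_solution n f h x"
proof (cases "n = 0")
  case True
  then have "is_weak_solution n f h (\<lambda>_. 0)"
    by (simp add: is_weak_solution_def gridE_def)
  then show ?thesis by blast
next
  case False
  define g where "g a = snd (shoot f h n a (n - 1))" for a
  have "continuous_on UNIV g"
    unfolding g_def using continuous_on_shoot[OF fc] by (intro continuous_on_snd)
  moreover have "g a' - g a \<ge> real n * (a' - a)" if "a \<le> a'" for a a'
  proof (cases "a = a'")
    case False
    with that have "a < a'" by simp
    from conjunct2[OF shoot_gap_mono[OF P2 this, of h n "n - 1"]]
    show ?thesis using \<open>n \<noteq> 0\<close> by (simp add: g_def)
  qed simp
  ultimately obtain a where ga: "g a = 0"
    using expanding_continuous_has_root[of g "real n"] \<open>n \<noteq> 0\<close> by auto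
  define x where "x k = (if k \<le> n then fst (shoot f h n a k) else 0)" for k
  have "x n = fst (shoot f h n a (Suc (n - 1)))" using \<open>n \<noteq> 0\<close> by (simp add: x_def)
  then have "x \<in> gridE n" using ga by (simp add: gridE_def x_def g_def)
  moreover have "2 * x k - x (k + 1) - x (k - 1)
      = (h (real k / real n) - f (real k / real n) (real n * fdiff x (k - 1)) (x k)) / (real n)^2"
    if k: "1 \<le> k" "k < n" for k
  proof -
    obtain j where j: "k = Suc j" using k by (cases k) auto
    have "min 1 (real (Suc j) / real n) = real (Suc j) / real n" using k j by simp
    then show ?thesis using k unfolding j x_def fdiff_def
      by (simp add: algebra_simps diff_divide_distrib)
  qed
  ultimately show ?thesis using weak_solution_if_difference_equation by blast
qed

theorem mainTheorem2:
  fixes n :: nat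
    and f :: "real \<Rightarrow> real \<Rightarrow> real \<Rightarrow> real"
    and h :: "real \<Rightarrow> real"
  assumes "continuous_on ({0..1} \<times> UNIV \<times> UNIV) (\<lambda>(t, w, s). f t w s)"
    and "\<forall>t\<in>{0..1}. f t 0 0 = 0"
    and "cond_P2 f"
    and "continuous_on {0..1} h"
    and "h 0 = 0" and "h 1 = 0"
  shows "\<exists>!x. is_weak_solution n f h x"
  using weak_solution_exists[OF assms(1,3)] weak_solution_unique[OF assms(3)]
  by (rule ex_ex1I)

end
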